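(* Work in round-to-nearest mode with $u=2^{-p}$. Let $x_h,x_l,y_h,y_l\in\mathbb{F}_p$ satisfy $\mathrm{RN}(x_h+x_l)=x_h$ and $\mathrm{RN}(y_h+y_l)=y_h$, and suppose $x_h$ and $y_h$ have opposite signs. Run the sloppy addition algorithm with all operations in $\mathrm{RN}$: 1. $(s_h,s_l)=\mathrm{2Sum}(x_h,y_h)$; 2. $v=\mathrm{RN}(x_l+y_l)$; 3. $w=\mathrm{RN}(s_l+v)$; 4. $(z_h,z_l)=\mathrm{Fast2Sum}(s_h,w)$. Let $\varepsilon=\dfrac{|z_h+z_l-(x_h+x_l+y_h+y_l)|}{|x_h+x_l+y_h+y_l|}$ be its relative error. (i) If $r(x_h,y_h)\le\frac12$, then $\varepsilon\le 3u^2+O(u^3)$. (ii) If $r(x_h,y_h)>\frac12$, the tie-breaking rule of $\mathrm{RN}$ is ties-to-even or ties-to-away, and $|x_h|$ and $|y_h|$ are not two consecutive floating-point numbers, then $\varepsilon\le u$.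
   Context: $\mathbb{F}_p$ is the set of radix-2, precision-$p$ floating-point numbers with unbounded exponent range. $\mathrm{RN}$ denotes rounding to nearest (with some tie-breaking rule), and $u=2^{-p}$. For reals $x,y$, $r(x,y)=\min(|x|,|y|)/\max(|x|,|y|)$ if $xy<0$, and $r(x,y)=0$ otherwise. $\mathrm{2Sum}(a,b)$ computes, in order, $s=\mathrm{RN}(a+b)$, $a'=\mathrm{RN}(s-b)$, $b'=\mathrm{RN}(s-a')$, $\delta_a=\mathrm{RN}(a-a')$, $\delta_b=\mathrm{RN}(b-b')$, $t=\mathrm{RN}(\delta_a+\delta_b)$, and returns $(s,t)$. $\mathrm{Fast2Sum}(a,b)$ computes $s=\mathrm{RN}(a+b)$ and $t=\mathrm{RN}(b-\mathrm{RN}(s-a))$, and returns $(s,t)$. *)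

theory Defs
  imports Complex_Main
begin

text \<open>Radix-2, precision-p floating-point numbers with unbounded exponent range.\<close>
definition Fp :: "nat \<Rightarrow> real set" where
  "Fp p = {x. \<exists>m e :: int. x = of_int m * 2 powr of_int e \<and> \<bar>m\<bar> < 2 ^ p}"

definition unit_round :: "nat \<Rightarrow> real" where
  "unit_round p = 2 powr (- real p)"

definition is_nearest :: "nat \<Rightarrow> real \<Rightarrow> real \<Rightarrow> bool" where
  "is_nearest p x f \<longleftrightarrow> f \<in> Fp p \<and> (\<forall>g \<in> Fp p. \<bar>f - x\<bar> \<le> \<bar>g - x\<bar>)"

definition is_RN :: "nat \<Rightarrow> (real \<Rightarrow> real) \<Rightarrow> bool" where
  "is_RN p rn \<longleftrightarrow> (\<forall>x. is_nearest p x (rn x))"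

definition even_float :: "nat \<Rightarrow> real \<Rightarrow> bool" where
  "even_float p f \<longleftrightarrow> (\<exists>m e :: int. f = of_int m * 2 powr of_int e \<and>
      2 ^ (p - 1) \<le> \<bar>m\<bar> \<and> \<bar>m\<bar> < 2 ^ p \<and> even m)"

definition ties_to_even :: "nat \<Rightarrow> (real \<Rightarrow> real) \<Rightarrow> bool" where
  "ties_to_even p rn \<longleftrightarrow>
     (\<forall>x f. is_nearest p x f \<and> f \<noteq> rn x \<longrightarrow> even_float p (rn x))"

definition ties_to_away :: "nat \<Rightarrow> (real \<Rightarrow> real) \<Rightarrow> bool" where
  "ties_to_away p rn \<longleftrightarrow> (\<forall>x f. is_nearest p x f \<longrightarrow> \<bar>f\<bar> \<le> \<bar>rn x\<bar>)"

definition ratio_r :: "real \<Rightarrow> real \<Rightarrow> real" where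
  "ratio_r x y = (if x * y < 0 then min \<bar>x\<bar> \<bar>y\<bar> / max \<bar>x\<bar> \<bar>y\<bar> else 0)"

definition TwoSum :: "(real \<Rightarrow> real) \<Rightarrow> real \<Rightarrow> real \<Rightarrow> real \<times> real" where
  "TwoSum rn a b =
     (let s = rn (a + b); a' = rn (s - b); b' = rn (s - a');
          da = rn (a - a'); db = rn (b - b'); t = rn (da + db) in (s, t))"

definition Fast2Sum :: "(real \<Rightarrow> real) \<Rightarrow> real \<Rightarrow> real \<Rightarrow> real \<times> real" where
  "Fast2Sum rn a b = (let s = rn (a + b); t = rn (b - rn (s - a)) in (s, t))"

definition sloppy_add :: "(real \<Rightarrow> real) \<Rightarrow> real \<Rightarrow> real \<Rightarrow> real \<Rightarrow> real \<Rightarrow> real \<times> real" where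
  "sloppy_add rn xh xl yh yl =
     (let (sh, sl) = TwoSum rn xh yh; v = rn (xl + yl); w = rn (sl + v) in Fast2Sum rn sh w)"

definition rel_err :: "real \<times> real \<Rightarrow> real \<Rightarrow> real" where
  "rel_err z x = \<bar>fst z + snd z - x\<bar> / \<bar>x\<bar>"

definition consecutive_floats :: "nat \<Rightarrow> real \<Rightarrow> real \<Rightarrow> bool" where
  "consecutive_floats p a b \<longleftrightarrow> a \<in> Fp p \<and> b \<in> Fp p \<and> a \<noteq> b \<and>
     \<not> (\<exists>f \<in> Fp p. min a b < f \<and> f < max a b)"

end

(*
  Write S = xh + yh and L = xl + yl, let H be the high part of larger magnitude, h the other
  one, A the power of two with A <= |H| < 2A and U = u A.  As (xh, xl) and (yh, yl) are
  double words, |xl| and |yl| are at most half an ulp of xh and yh.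

  (i) If r(xh, yh) <= 1/2, 2Sum is error-free, so the algorithm returns sh + w with
  sh + sl = S and w = RN(sl + RN(L)), Fast2Sum being exact because |w| <= |sh|.  The error
  is the sum of the rounding errors of RN(L) and of w.  Splitting on |S| >= A and on the
  size of |h| (at least A/2: S is a float; between A/4 and A/2: S lies on the grid U/2, so
  either |L| <= U or w is exact; below A/4: |S| >= 3A/4) gives in every case an error of at
  most k u^2 A while |S + L| >= (l - m u) A with k (1 - 3u) <= 3 (l - m u).  Hence the
  relative error is at most 3u^2 / (1 - 3u) <= 3u^2 + 18u^3 once p >= 3.

  (ii) If r(xh, yh) > 1/2, S is a float by Sterbenz's lemma, so sl = 0 and the result is
  exactly S + RN(L), with relative error |RN(L) - L| / |S + L| <= u |L| / |S + L|.  A float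
  strictly between |h| and |H| forces |S| >= 2U, even |S| >= 3U unless |H| = A, and in
  the latter case the low part of H is at least -U/2.  In every case |L| <= |S + L|.
*)

theory Submission
  imports Defs
begin

section \<open>Powers of two and integer multiples\<close>

definition is_pow2 :: "real \<Rightarrow> bool" where
  "is_pow2 B \<longleftrightarrow> (\<exists>k::int. B = 2 powr of_int k)"

definition int_multiple :: "real \<Rightarrow> real \<Rightarrow> bool" where
  "int_multiple g x \<longleftrightarrow> (\<exists>k::int. x = of_int k * g)"

lemma is_pow2_pos: "is_pow2 B \<Longrightarrow> 0 < B"
  unfolding is_pow2_def by auto

lemma is_pow2_mult:
  assumes "is_pow2 A" "is_pow2 B"
  shows "is_pow2 (A * B)"
proof -
  obtain a b :: int where "A = 2 powr a" "B = 2 powr b"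
    using assms unfolding is_pow2_def by blast
  then have "A * B = 2 powr of_int (a + b)" by (simp add: powr_add)
  then show ?thesis unfolding is_pow2_def by blast
qed

lemma is_pow2_power: "is_pow2 (2 ^ n)"
proof -
  have "(2::real) ^ n = 2 powr of_int (int n)" by (simp add: powr_realpow)
  then show ?thesis unfolding is_pow2_def by blast
qed

lemma is_pow2_double: "is_pow2 B \<Longrightarrow> is_pow2 (2 * B)"
  using is_pow2_mult is_pow2_power[of 1] by simp

lemma is_pow2_half:
  assumes "is_pow2 B"
  shows "is_pow2 (B / 2)"
proof -
  have "is_pow2 (1 / 2)"
    unfolding is_pow2_def by (rule exI[of _ "-1"]) (simp add: powr_minus_divide)
  from is_pow2_mult[OF assms this] show ?thesis by simp
qed

lemma is_pow2_unit_round: "is_pow2 (unit_round p)"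
  unfolding is_pow2_def unit_round_def by (rule exI[of _ "- int p"]) simp

lemma unit_round_pos: "0 < unit_round p"
  using is_pow2_pos is_pow2_unit_round by blast

lemma power_mult_unit_round: "2 ^ p * unit_round p = 1"
  by (simp add: unit_round_def powr_minus_divide powr_realpow)

lemma unit_round_mult_power_cancel [simp]: "unit_round p * (2 ^ p * x) = x"
  by (metis mult.assoc mult.commute mult_1 power_mult_unit_round)

lemma unit_round_le:
  assumes "m \<le> p"
  shows "unit_round p \<le> 1 / 2 ^ m"
proof -
  have "(2::real) ^ m \<le> 2 ^ p" using assms by (rule power_increasing) simp
  then have "1 / (2::real) ^ p \<le> 1 / 2 ^ m" by (rule divide_left_mono) simp_all
  then show ?thesis by (simp add: unit_round_def powr_minus_divide powr_realpow)
qed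

lemma is_pow2_double_le:
  assumes "is_pow2 A" "is_pow2 B" "A < B"
  shows "2 * A \<le> B"
proof -
  obtain a b :: int where ab: "A = 2 powr a" "B = 2 powr b"
    using assms(1,2) unfolding is_pow2_def by blast
  with assms(3) have "a + 1 \<le> b" by simp
  then have "2 powr (a + 1) \<le> 2 powr b" by simp
  then show ?thesis using ab by (simp add: powr_add)
qed

lemma is_pow2_binade:
  assumes "x \<noteq> 0"
  obtains B where "is_pow2 B" "B \<le> \<bar>x\<bar>" "\<bar>x\<bar> < 2 * B"
proof
  define k where "k = \<lfloor>log 2 \<bar>x\<bar>\<rfloor>"
  show "is_pow2 (2 powr k)" unfolding is_pow2_def by blast
  have "2 powr k \<le> \<bar>x\<bar> \<and> \<bar>x\<bar> < 2 powr (k + 1)"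
    using floor_log_eq_powr_iff[of "\<bar>x\<bar>" 2 k] assms unfolding k_def by simp
  then show "2 powr k \<le> \<bar>x\<bar>" "\<bar>x\<bar> < 2 * 2 powr k"
    by (simp_all add: powr_add)
qed

lemma int_multiple_refl: "int_multiple g g"
  unfolding int_multiple_def by (rule exI[of _ 1]) simp

lemma int_multiple_add:
  assumes "int_multiple g x" "int_multiple g y"
  shows "int_multiple g (x + y)"
proof -
  obtain k l where "x = of_int k * g" "y = of_int l * g"
    using assms unfolding int_multiple_def by blast
  then have "x + y = of_int (k + l) * g" by (simp add: distrib_right)
  then show ?thesis unfolding int_multiple_def by blast
qed

lemma int_multiple_uminus:
  assumes "int_multiple g x"
  shows "int_multiple g (- x)"
proof -
  obtain k where "x = of_int k * g" using assms unfolding int_multiple_def by blast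
  then have "- x = of_int (- k) * g" by simp
  then show ?thesis unfolding int_multiple_def by blast
qed

lemma int_multiple_diff: "int_multiple g x \<Longrightarrow> int_multiple g y \<Longrightarrow> int_multiple g (x - y)"
  using int_multiple_add int_multiple_uminus by fastforce

lemma int_multiple_abs: "int_multiple g x \<Longrightarrow> int_multiple g \<bar>x\<bar>"
  by (cases "0 \<le> x") (auto intro: int_multiple_uminus)

lemma int_multiple_trans:
  assumes "int_multiple g h" "int_multiple h x"
  shows "int_multiple g x"
proof -
  obtain k l where "h = of_int k * g" "x = of_int l * h"
    using assms unfolding int_multiple_def by blast
  then have "x = of_int (l * k) * g" by simp
  then show ?thesis unfolding int_multiple_def by blast
qed

lemma int_multiple_double:
  assumes "int_multiple (2 * g) x"
  shows "int_multiple g x"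
proof -
  obtain k where "x = of_int k * (2 * g)" using assms unfolding int_multiple_def by blast
  then have "x = of_int (2 * k) * g" by simp
  then show ?thesis unfolding int_multiple_def by blast
qed

lemma int_multiple_pow2:
  assumes "is_pow2 g" "is_pow2 B" "g \<le> B"
  shows "int_multiple g B"
proof -
  obtain a b :: int where ab: "g = 2 powr a" "B = 2 powr b"
    using assms(1,2) unfolding is_pow2_def by blast
  with assms(3) have "a \<le> b" by simp
  then have "2 powr real_of_int (b - a) = real_of_int (2 ^ nat (b - a))"
    by (simp add: powr_int del: of_int_diff)
  moreover have "B = 2 powr real_of_int (b - a) * g"
    using ab by (simp add: powr_add[symmetric])
  ultimately have "B = of_int (2 ^ nat (b - a)) * g" by simp
  then show ?thesis unfolding int_multiple_def by blast
qed

lemma int_multiple_gap: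
  assumes "int_multiple g x" "int_multiple g y" "0 < g" "x < y"
  shows "x + g \<le> y"
proof -
  obtain k where k: "y - x = of_int k * g"
    using int_multiple_diff[OF assms(2,1)] unfolding int_multiple_def by blast
  with assms(4) have "0 < of_int k * g" by simp
  with assms(3) have "0 < k" by (simp add: zero_less_mult_iff)
  then have "1 * g \<le> of_int k * g" using assms(3) by simp
  with k show ?thesis by simp
qed

section \<open>Floating-point numbers and rounding to nearest\<close>

lemma Fp_iff_int_multiple:
  "x \<in> Fp p \<longleftrightarrow> (\<exists>g. is_pow2 g \<and> int_multiple g x \<and> \<bar>x\<bar> < 2 ^ p * g)"
proof
  assume "x \<in> Fp p"
  then obtain m e :: int where x: "x = of_int m * 2 powr e" and m: "\<bar>m\<bar> < 2 ^ p"
    unfolding Fp_def by blast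
  from m have "\<bar>real_of_int m\<bar> < 2 ^ p"
    by (metis of_int_abs of_int_less_iff of_int_numeral of_int_power)
  then have "\<bar>x\<bar> < 2 ^ p * 2 powr e" using x by (simp add: abs_mult)
  then show "\<exists>g. is_pow2 g \<and> int_multiple g x \<and> \<bar>x\<bar> < 2 ^ p * g"
    using x unfolding is_pow2_def int_multiple_def by blast
next
  assume "\<exists>g. is_pow2 g \<and> int_multiple g x \<and> \<bar>x\<bar> < 2 ^ p * g"
  then obtain g m e where g: "g = 2 powr of_int e" and x: "x = of_int m * g"
    and bound: "\<bar>x\<bar> < 2 ^ p * g"
    unfolding is_pow2_def int_multiple_def by blast
  from bound have "\<bar>real_of_int m\<bar> < 2 ^ p" using x g by (simp add: abs_mult)
  then have "\<bar>m\<bar> < 2 ^ p"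
    by (metis of_int_abs of_int_less_iff of_int_numeral of_int_power)
  then show "x \<in> Fp p" unfolding Fp_def using x g by blast
qed

lemma Fp_0 [simp]: "0 \<in> Fp p"
  unfolding Fp_iff_int_multiple int_multiple_def
  by (rule exI[of _ 1]) (simp add: is_pow2_def exI[of _ 0])

lemma Fp_uminus: "x \<in> Fp p \<Longrightarrow> - x \<in> Fp p"
  unfolding Fp_iff_int_multiple using int_multiple_uminus by fastforce

lemma Fp_uminus_iff [simp]: "- x \<in> Fp p \<longleftrightarrow> x \<in> Fp p"
  using Fp_uminus[of x p] Fp_uminus[of "- x" p] by auto

lemma Fp_abs_iff [simp]: "\<bar>x\<bar> \<in> Fp p \<longleftrightarrow> x \<in> Fp p"
  by (cases "0 \<le> x") auto

lemma Fp_scale_pow2: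
  assumes "x \<in> Fp p" "is_pow2 c"
  shows "c * x \<in> Fp p"
proof -
  obtain g k where g: "is_pow2 g" "x = of_int k * g" "\<bar>x\<bar> < 2 ^ p * g"
    using assms(1) unfolding Fp_iff_int_multiple int_multiple_def by blast
  have "c * x = of_int k * (c * g)" "\<bar>c * x\<bar> < 2 ^ p * (c * g)"
    using g(2,3) is_pow2_pos[OF assms(2)] by (simp_all add: abs_mult)
  then show ?thesis unfolding Fp_iff_int_multiple int_multiple_def
    using is_pow2_mult[OF assms(2) g(1)] by blast
qed

lemma Fp_double: "x \<in> Fp p \<Longrightarrow> 2 * x \<in> Fp p"
  using Fp_scale_pow2 is_pow2_power[of 1] by simp

lemma Fp_half: "x \<in> Fp p \<Longrightarrow> x / 2 \<in> Fp p"
  using Fp_scale_pow2 is_pow2_half[OF is_pow2_power[of 0]] by fastforce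

lemma Fp_pow2:
  assumes "1 \<le> p" "is_pow2 B"
  shows "B \<in> Fp p"
proof -
  have "(1::real) < 2 ^ p" using assms(1) by simp
  then have "\<bar>B\<bar> < 2 ^ p * B" using is_pow2_pos[OF assms(2)] by simp
  then show ?thesis unfolding Fp_iff_int_multiple using assms(2) int_multiple_refl by blast
qed

lemma Fp_if_int_multiple:
  assumes "1 \<le> p" "is_pow2 B" "int_multiple (unit_round p * B) x" "\<bar>x\<bar> \<le> B"
  shows "x \<in> Fp p"
proof (cases "\<bar>x\<bar> = B")
  case True
  then have "x = B \<or> x = - B" by linarith
  then show ?thesis using Fp_pow2[OF assms(1,2)] by auto
next
  case False
  with assms(4) have "\<bar>x\<bar> < 2 ^ p * (unit_round p * B)"
    using power_mult_unit_round[of p] by (simp add: mult.assoc[symmetric])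
  then show ?thesis unfolding Fp_iff_int_multiple
    using assms(3) is_pow2_mult[OF is_pow2_unit_round assms(2)] by blast
qed

lemma Fp_int_multiple:
  assumes "x \<in> Fp p" "is_pow2 B" "B \<le> \<bar>x\<bar>"
  shows "int_multiple (2 * unit_round p * B) x"
proof -
  obtain g where g: "is_pow2 g" "int_multiple g x" "\<bar>x\<bar> < 2 ^ p * g"
    using assms(1) Fp_iff_int_multiple by blast
  have uB: "is_pow2 (unit_round p * B)"
    using is_pow2_mult[OF is_pow2_unit_round assms(2)] .
  from assms(3) g(3) have "unit_round p * B < unit_round p * (2 ^ p * g)"
    using unit_round_pos[of p] by (intro mult_strict_left_mono) auto
  then have "unit_round p * B < g" by (simp only: unit_round_mult_power_cancel)
  then have "2 * (unit_round p * B) \<le> g" using is_pow2_double_le[OF uB g(1)] by blast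
  then have "int_multiple (2 * (unit_round p * B)) g"
    using int_multiple_pow2[OF is_pow2_double[OF uB] g(1)] by blast
  then show ?thesis using int_multiple_trans g(2) by (simp add: mult.assoc)
qed

lemma sterbenz_nonneg:
  assumes "1 \<le> p" "x \<in> Fp p" "y \<in> Fp p" "0 \<le> y" "y \<le> x" "x \<le> 2 * y"
  shows "x - y \<in> Fp p"
proof (cases "y = 0")
  case True
  with assms(5,6) show ?thesis by simp
next
  case False
  then obtain B where B: "is_pow2 B" "B \<le> \<bar>y\<bar>" "\<bar>y\<bar> < 2 * B"
    using is_pow2_binade by blast
  have "int_multiple (unit_round p * (2 * B)) (x - y)"
    using int_multiple_diff[OF Fp_int_multiple[OF assms(2) B(1)] Fp_int_multiple[OF assms(3) B(1,2)]]
      B(2) assms(4,5) by (simp add: mult_ac)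
  moreover have "\<bar>x - y\<bar> \<le> 2 * B" using B(3) assms(4-6) by simp
  ultimately show ?thesis using Fp_if_int_multiple[OF assms(1) is_pow2_double[OF B(1)]] by blast
qed

lemma sterbenz:
  assumes "1 \<le> p" "x \<in> Fp p" "y \<in> Fp p" "0 \<le> x * y" "\<bar>y\<bar> \<le> 2 * \<bar>x\<bar>" "\<bar>x\<bar> \<le> 2 * \<bar>y\<bar>"
  shows "x - y \<in> Fp p"
proof -
  have "\<bar>x\<bar> - \<bar>y\<bar> \<in> Fp p"
  proof (cases "\<bar>y\<bar> \<le> \<bar>x\<bar>")
    case True
    then show ?thesis using sterbenz_nonneg[of p "\<bar>x\<bar>" "\<bar>y\<bar>"] assms by simp
  next
    case False
    then have "\<bar>y\<bar> - \<bar>x\<bar> \<in> Fp p" using sterbenz_nonneg[of p "\<bar>y\<bar>" "\<bar>x\<bar>"] assms by simp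
    then show ?thesis using Fp_uminus by fastforce
  qed
  moreover have "\<bar>x - y\<bar> = \<bar>\<bar>x\<bar> - \<bar>y\<bar>\<bar>"
    using assms(4) by (auto simp: abs_if zero_le_mult_iff)
  ultimately show ?thesis by (metis Fp_abs_iff)
qed

lemma Fp_gap:
  assumes "x \<in> Fp p" "y \<in> Fp p" "is_pow2 B" "B \<le> x" "x < y"
  shows "x + 2 * unit_round p * B \<le> y"
proof -
  have "0 < 2 * unit_round p * B" using unit_round_pos is_pow2_pos[OF assms(3)] by simp
  then show ?thesis
    using int_multiple_gap[OF Fp_int_multiple[OF assms(1,3)] Fp_int_multiple[OF assms(2,3)]] assms(4,5)
    by simp
qed

lemma Fp_add_int_multiple:
  assumes "x \<in> Fp p" "y \<in> Fp p" "is_pow2 C" "C \<le> \<bar>x\<bar>" "C \<le> \<bar>y\<bar>"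
  shows "int_multiple (2 * unit_round p * C) (x + y)"
  using int_multiple_add[OF Fp_int_multiple[OF assms(1,3,4)] Fp_int_multiple[OF assms(2,3,5)]] .

lemma add_in_Fp_if_int_multiple:
  assumes "2 \<le> p" "is_pow2 U" "int_multiple (U / 2) x" "y \<in> Fp p" "U \<le> \<bar>y\<bar>" "\<bar>x + y\<bar> \<le> 2 * U"
  shows "x + y \<in> Fp p"
proof -
  have p: "1 \<le> p" using assms(1) by simp
  have g: "is_pow2 (unit_round p * (2 * U))"
    using is_pow2_mult[OF is_pow2_unit_round is_pow2_double[OF assms(2)]] .
  have "unit_round p * (2 * U) \<le> 1 / 4 * (2 * U)"
    using unit_round_le[OF assms(1)] is_pow2_pos[OF assms(2)] by (intro mult_right_mono) simp_all
  then have "int_multiple (unit_round p * (2 * U)) (U / 2)"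
    using int_multiple_pow2[OF g is_pow2_half[OF assms(2)]] by simp
  then have "int_multiple (unit_round p * (2 * U)) x" using int_multiple_trans assms(3) by blast
  moreover have "int_multiple (unit_round p * (2 * U)) y"
    using Fp_int_multiple[OF assms(4,2,5)] by (simp add: mult_ac)
  ultimately show ?thesis
    using Fp_if_int_multiple[OF p is_pow2_double[OF assms(2)]] int_multiple_add assms(6) by blast
qed

lemma rn_in_Fp: "is_RN p rn \<Longrightarrow> rn x \<in> Fp p"
  unfolding is_RN_def is_nearest_def by blast

lemma rn_nearest: "is_RN p rn \<Longrightarrow> g \<in> Fp p \<Longrightarrow> \<bar>rn x - x\<bar> \<le> \<bar>g - x\<bar>"
  unfolding is_RN_def is_nearest_def by blast

lemma rn_of_Fp: "is_RN p rn \<Longrightarrow> x \<in> Fp p \<Longrightarrow> rn x = x"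
  using rn_nearest[of p rn x x] by simp

lemma rn_le_Fp: "is_RN p rn \<Longrightarrow> f \<in> Fp p \<Longrightarrow> z \<le> f \<Longrightarrow> rn z \<le> f"
  using rn_nearest[of p rn f z] by linarith

lemma rn_ge_Fp: "is_RN p rn \<Longrightarrow> f \<in> Fp p \<Longrightarrow> f \<le> z \<Longrightarrow> f \<le> rn z"
  using rn_nearest[of p rn f z] by linarith

lemma rn_abs_le_Fp: "is_RN p rn \<Longrightarrow> f \<in> Fp p \<Longrightarrow> \<bar>z\<bar> \<le> f \<Longrightarrow> \<bar>rn z\<bar> \<le> f"
  using rn_le_Fp[of p rn f z] rn_ge_Fp[of p rn "- f" z] by (simp add: abs_le_iff)

lemma rn_abs_ge_Fp: "is_RN p rn \<Longrightarrow> f \<in> Fp p \<Longrightarrow> f \<le> \<bar>z\<bar> \<Longrightarrow> f \<le> \<bar>rn z\<bar>"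
  using rn_ge_Fp[of p rn f z] rn_le_Fp[of p rn "- f" z] by (cases "0 \<le> z") auto

lemma is_RN_reflect: "is_RN p rn \<Longrightarrow> is_RN p (\<lambda>x. - rn (- x))"
  unfolding is_RN_def is_nearest_def
  by (metis Fp_uminus_iff abs_minus_commute minus_diff_eq minus_minus diff_minus_eq_add add.commute)

lemma rn_error_pow2:
  assumes rn: "is_RN p rn" and "1 \<le> p" "is_pow2 B" "\<bar>z\<bar> \<le> B"
  shows "\<bar>rn z - z\<bar> \<le> unit_round p * B / 2"
proof -
  define g where "g = unit_round p * B"
  have g: "is_pow2 g" "B = 2 ^ p * g"
    unfolding g_def using is_pow2_mult[OF is_pow2_unit_round assms(3)]
    by (simp_all add: mult.assoc[symmetric] power_mult_unit_round)
  have "0 < g" using is_pow2_pos[OF g(1)] .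
  define n where "n = round (z / g)"
  have "\<bar>z\<bar> / g \<le> 2 ^ p" using assms(4) g(2) \<open>0 < g\<close> by (simp add: pos_divide_le_eq)
  then have "- (2 ^ p) \<le> z / g" "z / g \<le> (2::real) ^ p"
    using \<open>0 < g\<close> by (simp_all add: divide_le_eq le_divide_eq abs_le_iff)
  then have "round (- ((2::real) ^ p)) \<le> n" "n \<le> round ((2::real) ^ p)"
    unfolding n_def by (simp_all add: round_mono)
  moreover have "round ((2::real) ^ p) = 2 ^ p" "round (- ((2::real) ^ p)) = - (2 ^ p)"
    using round_of_int[of "2 ^ p"] round_of_int[of "- (2 ^ p)"] by simp_all
  ultimately have "\<bar>n\<bar> \<le> 2 ^ p" by linarith
  then have "\<bar>real_of_int n\<bar> \<le> 2 ^ p"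
    by (metis of_int_abs of_int_le_iff of_int_numeral of_int_power)
  then have "\<bar>of_int n * g\<bar> \<le> B"
    using g(2) \<open>0 < g\<close> by (simp add: abs_mult)
  then have "of_int n * g \<in> Fp p"
    using Fp_if_int_multiple[OF assms(2,3)] unfolding g_def int_multiple_def by blast
  then have "\<bar>rn z - z\<bar> \<le> \<bar>of_int n * g - z\<bar>" using rn_nearest[OF rn] by blast
  also have "\<dots> = \<bar>of_int n - z / g\<bar> * g"
    using \<open>0 < g\<close> by (simp add: abs_mult_pos left_diff_distrib)
  also have "\<dots> \<le> 1 / 2 * g"
    unfolding n_def using of_int_round_abs_le \<open>0 < g\<close> by (intro mult_right_mono) auto
  finally show ?thesis unfolding g_def by simp
qed

lemma rn_rel_error:
  assumes rn: "is_RN p rn" and "1 \<le> p"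
  shows "\<bar>rn z - z\<bar> \<le> unit_round p * \<bar>z\<bar>"
proof (cases "z = 0")
  case True
  then show ?thesis using rn_of_Fp[OF rn Fp_0] by simp
next
  case False
  then obtain B where B: "is_pow2 B" "B \<le> \<bar>z\<bar>" "\<bar>z\<bar> < 2 * B"
    using is_pow2_binade by blast
  have "\<bar>rn z - z\<bar> \<le> unit_round p * (2 * B) / 2"
    using rn_error_pow2[OF rn assms(2) is_pow2_double[OF B(1)]] B(3) by simp
  also have "\<dots> \<le> unit_round p * \<bar>z\<bar>" using B(2) unit_round_pos[of p] by simp
  finally show ?thesis .
qed

lemma rn_int_multiple:
  assumes rn: "is_RN p rn" and "1 \<le> p" "is_pow2 g" "int_multiple g z"
  shows "int_multiple g (rn z)"
proof -
  define B where "B = 2 ^ p * g"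
  have B: "is_pow2 B" "unit_round p * B = g"
    unfolding B_def using is_pow2_mult[OF is_pow2_power assms(3)]
    by (auto simp: mult.assoc[symmetric] power_mult_unit_round mult.commute[of "unit_round p"])
  show ?thesis
  proof (cases "\<bar>z\<bar> \<le> B")
    case True
    then have "z \<in> Fp p" using Fp_if_int_multiple[OF assms(2) B(1)] B(2) assms(4) by simp
    then show ?thesis using rn_of_Fp[OF rn] assms(4) by simp
  next
    case False
    then have "B \<le> \<bar>rn z\<bar>" using rn_abs_ge_Fp[OF rn Fp_pow2[OF assms(2) B(1)]] by simp
    then have "int_multiple (2 * g) (rn z)"
      using Fp_int_multiple[OF rn_in_Fp[OF rn] B(1)] B(2) by (simp add: mult.assoc)
    moreover have "int_multiple g (2 * g)"
      using int_multiple_pow2[OF assms(3) is_pow2_double[OF assms(3)]] is_pow2_pos[OF assms(3)] by simp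
    ultimately show ?thesis using int_multiple_trans by blast
  qed
qed

lemma rn_add_error_in_Fp_ordered:
  assumes rn: "is_RN p rn" and "1 \<le> p" "a \<in> Fp p" "b \<in> Fp p" "\<bar>b\<bar> \<le> \<bar>a\<bar>"
  shows "rn (a + b) - (a + b) \<in> Fp p"
proof (cases "b = 0")
  case True
  then show ?thesis using rn_of_Fp[OF rn assms(3)] by simp
next
  case False
  then obtain B where B: "is_pow2 B" "B \<le> \<bar>b\<bar>" "\<bar>b\<bar> < 2 * B"
    using is_pow2_binade by blast
  let ?g = "unit_round p * (2 * B)"
  have "int_multiple ?g (a + b)"
    using int_multiple_add[OF Fp_int_multiple[OF assms(3) B(1)] Fp_int_multiple[OF assms(4) B(1,2)]]
      B(2) assms(5) by (simp add: mult_ac)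
  then have "int_multiple ?g (rn (a + b) - (a + b))"
    using rn_int_multiple[OF rn assms(2) is_pow2_mult[OF is_pow2_unit_round is_pow2_double[OF B(1)]]]
      int_multiple_diff by blast
  moreover have "\<bar>rn (a + b) - (a + b)\<bar> \<le> 2 * B"
    using rn_nearest[OF rn assms(3), of "a + b"] B(3) by simp
  ultimately show ?thesis using Fp_if_int_multiple[OF assms(2) is_pow2_double[OF B(1)]] by blast
qed

lemma rn_add_error_in_Fp:
  assumes rn: "is_RN p rn" and "1 \<le> p" "a \<in> Fp p" "b \<in> Fp p"
  shows "rn (a + b) - (a + b) \<in> Fp p"
proof (cases "\<bar>b\<bar> \<le> \<bar>a\<bar>")
  case True
  then show ?thesis using rn_add_error_in_Fp_ordered[OF assms] by blast
next
  case False
  then show ?thesis using rn_add_error_in_Fp_ordered[OF rn assms(2,4,3)] by (simp add: add.commute)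
qed

lemma low_part_bound:
  assumes rn: "is_RN p rn" and "1 \<le> p" "h \<in> Fp p" "h \<noteq> 0" "rn (h + l) = h"
    and "is_pow2 B" "\<bar>h\<bar> < B"
  shows "\<bar>l\<bar> \<le> unit_round p * B / 2"
proof -
  obtain E where E: "is_pow2 E" "E \<le> \<bar>h\<bar>" "\<bar>h\<bar> < 2 * E"
    using is_pow2_binade assms(4) by blast
  define g where "g = unit_round p * (2 * E)"
  have g: "is_pow2 g" "0 < g" "g \<le> 2 * E"
    unfolding g_def using is_pow2_mult[OF is_pow2_unit_round is_pow2_double[OF E(1)]] is_pow2_pos
      unit_round_le[OF assms(2)] is_pow2_pos[OF E(1)] by (auto intro: mult_left_le_one_le)
  have mh: "int_multiple g h" unfolding g_def using Fp_int_multiple[OF assms(3) E(1,2)] by (simp add: mult_ac)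
  have "\<bar>h\<bar> + g \<le> 2 * E"
    using int_multiple_gap[OF int_multiple_abs[OF mh] int_multiple_pow2[OF g(1) is_pow2_double[OF E(1)] g(3)]
        g(2) E(3)] .
  then have "\<bar>h + g\<bar> \<le> 2 * E" "\<bar>h - g\<bar> \<le> 2 * E"
    using abs_triangle_ineq[of h g] abs_triangle_ineq4[of h g] g(2) by simp_all
  then have "h + g \<in> Fp p" "h - g \<in> Fp p"
    using Fp_if_int_multiple[OF assms(2) is_pow2_double[OF E(1)]] int_multiple_add[OF mh int_multiple_refl]
      int_multiple_diff[OF mh int_multiple_refl] unfolding g_def by simp_all
  then have "\<bar>l\<bar> \<le> \<bar>g - l\<bar>" "\<bar>l\<bar> \<le> \<bar>g + l\<bar>"
    using rn_nearest[OF rn, of "h + g" "h + l"] rn_nearest[OF rn, of "h - g" "h + l"] assms(5)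
    by (simp_all add: abs_minus_commute)
  then have "\<bar>l\<bar> \<le> g / 2" using g(2) by (auto simp: abs_if split: if_splits)
  moreover have "unit_round p * (2 * E) \<le> unit_round p * B"
    using is_pow2_double_le[OF E(1) assms(6)] E(2) assms(7) unit_round_pos[of p] by simp
  ultimately show ?thesis unfolding g_def by simp
qed

lemma low_part_bound_at_pow2:
  assumes rn: "is_RN p rn" and "1 \<le> p" "is_pow2 B" "rn (B + l) = B"
  shows "- (unit_round p * B / 2) \<le> l"
proof -
  define g where "g = unit_round p * B"
  have g: "is_pow2 g" "0 < g" "g \<le> B"
    unfolding g_def using is_pow2_mult[OF is_pow2_unit_round assms(3)] is_pow2_pos
      unit_round_le[OF assms(2)] is_pow2_pos[OF assms(3)] by (auto intro: mult_left_le_one_le)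
  have "int_multiple g (B - g)"
    using int_multiple_diff[OF int_multiple_pow2[OF g(1) assms(3) g(3)] int_multiple_refl] .
  then have "B - g \<in> Fp p" using Fp_if_int_multiple[OF assms(2,3)] g unfolding g_def by simp
  then have "\<bar>l\<bar> \<le> \<bar>g + l\<bar>"
    using rn_nearest[OF rn, of "B - g" "B + l"] assms(4) by (simp add: abs_minus_commute)
  then show ?thesis using g(2) unfolding g_def by (auto simp: abs_if split: if_splits)
qed

section \<open>Error-free transformations\<close>

lemma rn_add_sub_in_Fp_nonneg:
  assumes rn: "is_RN p rn" and "1 \<le> p" "a \<in> Fp p" "b \<in> Fp p" "0 \<le> a" "\<bar>b\<bar> \<le> a"
  shows "rn (a + b) - a \<in> Fp p"
proof -
  consider "0 \<le> b" | "b < 0" "a \<le> 2 * - b" | "b < 0" "2 * - b < a" by linarith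
  then show ?thesis
  proof cases
    case 1
    then have "a \<le> rn (a + b)" "rn (a + b) \<le> 2 * a"
      using rn_ge_Fp[OF rn assms(3)] rn_le_Fp[OF rn Fp_double[OF assms(3)]] assms(6) by simp_all
    then show ?thesis using sterbenz_nonneg[OF assms(2) rn_in_Fp[OF rn] assms(3)] assms(5) by simp
  next
    case 2
    then have "a + b \<in> Fp p"
      using sterbenz_nonneg[OF assms(2,3) Fp_uminus[OF assms(4)]] assms(6) by simp
    then show ?thesis using rn_of_Fp[OF rn] assms(4) by simp
  next
    case 3
    then have "a / 2 \<le> rn (a + b)" "rn (a + b) \<le> a"
      using rn_ge_Fp[OF rn Fp_half[OF assms(3)]] rn_le_Fp[OF rn assms(3)] by simp_all
    then have "a - rn (a + b) \<in> Fp p"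
      using sterbenz_nonneg[OF assms(2,3) rn_in_Fp[OF rn]] assms(5) by simp
    then show ?thesis by (metis Fp_uminus minus_diff_eq)
  qed
qed

lemma rn_add_sub_in_Fp:
  assumes rn: "is_RN p rn" and "1 \<le> p" "a \<in> Fp p" "b \<in> Fp p" "\<bar>b\<bar> \<le> \<bar>a\<bar>"
  shows "rn (a + b) - a \<in> Fp p"
proof (cases "0 \<le> a")
  case True
  then show ?thesis using rn_add_sub_in_Fp_nonneg[OF assms(1-4)] assms(5) by simp
next
  case False
  have "(\<lambda>x. - rn (- x)) (- a + - b) - (- a) \<in> Fp p"
    using rn_add_sub_in_Fp_nonneg[OF is_RN_reflect[OF rn] assms(2) Fp_uminus[OF assms(3)]
        Fp_uminus[OF assms(4)]] False assms(5) by simp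
  then have "a - rn (a + b) \<in> Fp p" by (simp add: add.commute[of b a])
  then show ?thesis by (metis Fp_uminus minus_diff_eq)
qed

lemma Fast2Sum_exact:
  assumes rn: "is_RN p rn" and "1 \<le> p" "a \<in> Fp p" "b \<in> Fp p" "\<bar>b\<bar> \<le> \<bar>a\<bar>"
  shows "fst (Fast2Sum rn a b) + snd (Fast2Sum rn a b) = a + b"
proof -
  define s where "s = rn (a + b)"
  have "rn (s - a) = s - a"
    unfolding s_def using rn_of_Fp[OF rn rn_add_sub_in_Fp[OF assms]] .
  moreover have "b - (s - a) \<in> Fp p"
    unfolding s_def using Fp_uminus[OF rn_add_error_in_Fp[OF rn assms(2-4)]] by (simp add: algebra_simps)
  ultimately show ?thesis unfolding Fast2Sum_def Let_def s_def[symmetric] using rn_of_Fp[OF rn] by simp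
qed

(* Once b' and da are exact, db is the rounding error of s - b and t is minus the rounding
   error of a + b, so both are floats. *)
lemma TwoSum_exact_if:
  assumes rn: "is_RN p rn" and "1 \<le> p" "a \<in> Fp p" "b \<in> Fp p"
    and exact_b': "rn (a + b) - rn (rn (a + b) - b) \<in> Fp p"
    and exact_da: "a - rn (rn (a + b) - b) \<in> Fp p"
  shows "TwoSum rn a b = (rn (a + b), a + b - rn (a + b))"
proof -
  define s where "s = rn (a + b)"
  define a' where "a' = rn (s - b)"
  have b': "rn (s - a') = s - a'" and da: "rn (a - a') = a - a'"
    using rn_of_Fp[OF rn] exact_b' exact_da unfolding s_def a'_def by simp_all
  have "rn (s + - b) - (s + - b) \<in> Fp p"
    using rn_add_error_in_Fp[OF rn assms(2) rn_in_Fp[OF rn] Fp_uminus[OF assms(4)]] unfolding s_def .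
  moreover have "b - (s - a') = rn (s + - b) - (s + - b)" unfolding a'_def by simp
  ultimately have "b - (s - a') \<in> Fp p" by metis
  then have db: "rn (b - (s - a')) = b - (s - a')" using rn_of_Fp[OF rn] by blast
  have "a - a' + (b - (s - a')) \<in> Fp p"
    using Fp_uminus[OF rn_add_error_in_Fp[OF rn assms(2-4)]] unfolding s_def by (simp add: algebra_simps)
  then have "rn (a - a' + (b - (s - a'))) = a + b - s" using rn_of_Fp[OF rn] by simp
  with b' da db show ?thesis
    unfolding TwoSum_def Let_def s_def[symmetric] a'_def[symmetric] by simp
qed

lemma TwoSum_of_Fp_sum:
  assumes rn: "is_RN p rn" and "1 \<le> p" "a \<in> Fp p" "b \<in> Fp p" "a + b \<in> Fp p"
  shows "TwoSum rn a b = (a + b, 0)"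
proof -
  have s: "rn (a + b) = a + b" using rn_of_Fp[OF rn assms(5)] .
  then have "rn (rn (a + b) - b) = a" using rn_of_Fp[OF rn assms(3)] by simp
  then show ?thesis using TwoSum_exact_if[OF assms(1-4)] s assms(3,4) by simp
qed

lemma TwoSum_exact_dominant:
  assumes rn: "is_RN p rn" and "2 \<le> p" "a \<in> Fp p" "b \<in> Fp p" "0 < a" "b < 0" "- b \<le> a / 2"
  shows "TwoSum rn a b = (rn (a + b), a + b - rn (a + b))"
proof -
  have p: "1 \<le> p" using assms(2) by simp
  define s where "s = rn (a + b)"
  define a' where "a' = rn (s - b)"
  have s: "a / 2 \<le> s" "s \<le> a"
    unfolding s_def using rn_ge_Fp[OF rn Fp_half[OF assms(3)]] rn_le_Fp[OF rn assms(3)] assms(6,7)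
    by simp_all
  have "unit_round p * \<bar>a + b\<bar> \<le> 1 / 4 * a"
    using unit_round_le[OF assms(2)] assms(5-7) by (intro mult_mono) auto
  then have "\<bar>s - (a + b)\<bar> \<le> a / 4"
    using rn_rel_error[OF rn p, of "a + b"] unfolding s_def by simp
  then have err: "- (a / 4) \<le> s - (a + b)" "s - (a + b) \<le> a / 4"
    by (simp_all only: abs_le_iff) linarith+
  have "\<bar>a' - (s - b)\<bar> \<le> \<bar>a - (s - b)\<bar>"
    unfolding a'_def using rn_nearest[OF rn assms(3)] .
  then have a': "a / 2 \<le> a'" "a' \<le> 3 * a / 2" "a' \<le> 2 * s"
    using s err assms(5-7) by (auto simp: abs_if split: if_splits)
  have "a - a' \<in> Fp p"
    using sterbenz[OF p assms(3) rn_in_Fp[OF rn]] a' assms(5) unfolding a'_def by simp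
  moreover have "s - a' \<in> Fp p"
    using sterbenz[OF p rn_in_Fp[OF rn] rn_in_Fp[OF rn]] s a' assms(5) unfolding s_def a'_def
    by simp
  ultimately show ?thesis using TwoSum_exact_if[OF rn p assms(3,4)] unfolding s_def a'_def by simp
qed

lemma TwoSum_exact_dominated:
  assumes rn: "is_RN p rn" and "1 \<le> p" "a \<in> Fp p" "b \<in> Fp p" "0 < a" "b < 0" "a \<le> - b / 2"
  shows "TwoSum rn a b = (rn (a + b), a + b - rn (a + b))"
proof -
  define s where "s = rn (a + b)"
  have "b \<le> s" "s \<le> b / 2"
    unfolding s_def using rn_ge_Fp[OF rn assms(4)] rn_le_Fp[OF rn Fp_half[OF assms(4)]] assms(5,7)
    by simp_all
  then have "s - b \<in> Fp p"
    using sterbenz[OF assms(2) rn_in_Fp[OF rn] assms(4)] assms(6) unfolding s_def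
    by (simp add: mult_nonpos_nonpos)
  then have a': "rn (s - b) = s - b" using rn_of_Fp[OF rn] by blast
  have "- (rn (a + b) - (a + b)) \<in> Fp p"
    using Fp_uminus[OF rn_add_error_in_Fp[OF rn assms(2-4)]] .
  moreover have "a - rn (s - b) = - (rn (a + b) - (a + b))" using a' unfolding s_def by simp
  ultimately have "a - rn (s - b) \<in> Fp p" by metis
  with a' show ?thesis using TwoSum_exact_if[OF rn assms(2-4)] assms(4) unfolding s_def by simp
qed

lemma TwoSum_reflect:
  "TwoSum (\<lambda>x. - rn (- x)) (- a) (- b) = (- fst (TwoSum rn a b), - snd (TwoSum rn a b))"
  unfolding TwoSum_def Let_def by (simp add: algebra_simps)

lemma TwoSum_exact_unbalanced:
  assumes rn: "is_RN p rn" and "2 \<le> p" "a \<in> Fp p" "b \<in> Fp p" "a * b < 0"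
    and "2 * \<bar>b\<bar> \<le> \<bar>a\<bar> \<or> 2 * \<bar>a\<bar> \<le> \<bar>b\<bar>"
  shows "TwoSum rn a b = (rn (a + b), a + b - rn (a + b))"
proof -
  have p: "1 \<le> p" using assms(2) by simp
  have pos: "TwoSum rn' a' b' = (rn' (a' + b'), a' + b' - rn' (a' + b'))"
    if "is_RN p rn'" "a' \<in> Fp p" "b' \<in> Fp p" "0 < a'" "b' < 0" "\<bar>a'\<bar> = \<bar>a\<bar>" "\<bar>b'\<bar> = \<bar>b\<bar>"
    for rn' a' b'
    using TwoSum_exact_dominant[OF that(1) assms(2) that(2-5)]
      TwoSum_exact_dominated[OF that(1) p that(2-5)] assms(6) that(4-7) by fastforce
  show ?thesis
  proof (cases "0 < a")
    case True
    with assms(5) have "b < 0" by (simp add: mult_less_0_iff)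
    with True show ?thesis using pos[OF rn assms(3,4)] by simp
  next
    case False
    with assms(5) have "0 < - a" "- b < 0" by (auto simp: mult_less_0_iff)
    then have "TwoSum (\<lambda>x. - rn (- x)) (- a) (- b)
        = (- rn (a + b), - (a + b) + rn (a + b))"
      using pos[OF is_RN_reflect[OF rn] Fp_uminus[OF assms(3)] Fp_uminus[OF assms(4)]]
      by (simp add: add.commute[of b a])
    then show ?thesis unfolding TwoSum_reflect by (simp add: prod_eq_iff)
  qed
qed

lemma sloppy_add_eq_Fast2Sum:
  "TwoSum rn xh yh = (sh, sl) \<Longrightarrow>
    sloppy_add rn xh xl yh yl = Fast2Sum rn sh (rn (sl + rn (xl + yl)))"
  by (simp add: sloppy_add_def)

section \<open>Unbalanced high parts\<close>

lemma ratio_r_le_half_iff: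
  assumes "x * y < 0"
  shows "ratio_r x y \<le> 1 / 2 \<longleftrightarrow> 2 * \<bar>y\<bar> \<le> \<bar>x\<bar> \<or> 2 * \<bar>x\<bar> \<le> \<bar>y\<bar>"
proof (cases "\<bar>x\<bar> \<le> \<bar>y\<bar>")
  case True
  have "0 < \<bar>y\<bar>" using assms by auto
  with True have "\<not> 2 * \<bar>y\<bar> \<le> \<bar>x\<bar>" by linarith
  with True assms \<open>0 < \<bar>y\<bar>\<close> show ?thesis
    unfolding ratio_r_def by (simp add: min_def max_def divide_le_eq mult.commute)
next
  case False
  then have "0 < \<bar>x\<bar>" "\<not> 2 * \<bar>x\<bar> \<le> \<bar>y\<bar>" by linarith+
  with False assms show ?thesis
    unfolding ratio_r_def by (simp add: min_def max_def divide_le_eq mult.commute)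
qed

lemma abs_add_opposite:
  fixes x y :: real
  assumes "x * y < 0" "\<bar>y\<bar> \<le> \<bar>x\<bar>"
  shows "\<bar>x + y\<bar> = \<bar>x\<bar> - \<bar>y\<bar>"
proof (cases "0 < x")
  case True
  with assms show ?thesis by (simp add: mult_less_0_iff)
next
  case False
  with assms show ?thesis by (simp add: mult_less_0_iff)
qed

(* With sh = RN S and sl = S - sh, the exact output of 2Sum on the high parts,
   RN (S - RN S + RN L) is the value w that sloppy addition passes to Fast2Sum. *)
definition accurate_tail :: "nat \<Rightarrow> (real \<Rightarrow> real) \<Rightarrow> real \<Rightarrow> real \<Rightarrow> bool" where
  "accurate_tail p rn S L \<longleftrightarrow>
     \<bar>rn (S - rn S + rn L)\<bar> \<le> \<bar>rn S\<bar> \<and>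
     \<bar>rn S + rn (S - rn S + rn L) - (S + L)\<bar> * (1 - 3 * unit_round p)
       \<le> 3 * unit_round p ^ 2 * \<bar>S + L\<bar> \<and>
     S + L \<noteq> 0"

lemma accurate_tailI:
  fixes p :: nat and k l m :: real
  defines "u \<equiv> unit_round p"
  assumes "u \<le> 1 / 8" "0 < A" "0 < k"
    and tail: "\<bar>rn (S - rn S + rn L)\<bar> \<le> \<bar>rn S\<bar>"
    and err: "\<bar>rn S + rn (S - rn S + rn L) - (S + L)\<bar> \<le> k * u\<^sup>2 * A"
    and sum: "(l - m * u) * A \<le> \<bar>S + L\<bar>"
    and coeff: "k * (1 - 3 * u) \<le> 3 * (l - m * u)"
  shows "accurate_tail p rn S L"
proof -
  have "0 \<le> 1 - 3 * u" using assms(2) by simp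
  with err have "\<bar>rn S + rn (S - rn S + rn L) - (S + L)\<bar> * (1 - 3 * u) \<le> k * u\<^sup>2 * A * (1 - 3 * u)"
    by (rule mult_right_mono)
  also have "\<dots> = u\<^sup>2 * A * (k * (1 - 3 * u))" by (simp add: mult_ac)
  also have "\<dots> \<le> u\<^sup>2 * A * (3 * (l - m * u))"
    using coeff assms(3) by (intro mult_left_mono) simp_all
  also have "\<dots> = 3 * u\<^sup>2 * ((l - m * u) * A)" by (simp add: mult_ac)
  also have "\<dots> \<le> 3 * u\<^sup>2 * \<bar>S + L\<bar>"
    using sum by (intro mult_left_mono) simp_all
  finally have "\<bar>rn S + rn (S - rn S + rn L) - (S + L)\<bar> * (1 - 3 * u) \<le> 3 * u\<^sup>2 * \<bar>S + L\<bar>" .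
  moreover have "0 < k * (1 - 3 * u)" using assms(2,4) by simp
  with coeff have "0 < 3 * (l - m * u)" by linarith
  with assms(3) have "0 < (l - m * u) * A" by simp
  ultimately show ?thesis unfolding accurate_tail_def using tail sum u_def by auto
qed

lemma tail_le_head:
  assumes rn: "is_RN p rn" and "1 \<le> p" "is_pow2 A" "A / 2 \<le> \<bar>S\<bar>"
    and "is_pow2 B" "B \<le> A / 2" "\<bar>S - rn S + rn L\<bar> \<le> B"
  shows "\<bar>rn (S - rn S + rn L)\<bar> \<le> \<bar>rn S\<bar>"
proof -
  have "\<bar>rn (S - rn S + rn L)\<bar> \<le> B" using rn_abs_le_Fp[OF rn Fp_pow2[OF assms(2,5)] assms(7)] .
  also have "\<dots> \<le> A / 2" by fact
  also have "\<dots> \<le> \<bar>rn S\<bar>" using rn_abs_ge_Fp[OF rn Fp_pow2[OF assms(2) is_pow2_half[OF assms(3)]] assms(4)] .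
  finally show ?thesis .
qed

lemma tail_error_le:
  fixes rn :: "real \<Rightarrow> real"
  shows "\<bar>rn S + rn (S - rn S + rn L) - (S + L)\<bar>
     \<le> \<bar>rn (S - rn S + rn L) - (S - rn S + rn L)\<bar> + \<bar>rn L - L\<bar>"
proof -
  have "rn S + rn (S - rn S + rn L) - (S + L)
      = (rn (S - rn S + rn L) - (S - rn S + rn L)) + (rn L - L)" by linarith
  then show ?thesis by (metis abs_triangle_ineq)
qed

lemma abs_tail_argument_le:
  fixes rn :: "real \<Rightarrow> real"
  shows "\<bar>S - rn S + rn L\<bar> \<le> \<bar>S - rn S\<bar> + \<bar>L\<bar> + \<bar>rn L - L\<bar>"
proof -
  have "\<bar>rn L\<bar> \<le> \<bar>L\<bar> + \<bar>rn L - L\<bar>" using abs_triangle_ineq[of L "rn L - L"] by simp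
  then show ?thesis using abs_triangle_ineq[of "S - rn S" "rn L"] by linarith
qed

lemma accurate_tail_large_sum:
  fixes p :: nat
  defines "u \<equiv> unit_round p"
  assumes rn: "is_RN p rn" and "3 \<le> p" "is_pow2 A"
    and "A \<le> \<bar>S\<bar>" "\<bar>S\<bar> \<le> 2 * A" "\<bar>L\<bar> \<le> 3 / 2 * (u * A)"
  shows "accurate_tail p rn S L"
proof -
  have p: "1 \<le> p" and u: "0 < u" "u \<le> 1 / 8"
    using assms(3) unit_round_pos unit_round_le[OF assms(3)] unfolding u_def by auto
  define U where "U = u * A"
  have U: "is_pow2 U" "0 < U"
    unfolding U_def u_def using is_pow2_mult[OF is_pow2_unit_round assms(4)] is_pow2_pos by auto
  have "u * U \<le> U / 8" using u U(2) by (simp add: mult_right_mono)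
  have U4: "is_pow2 (4 * U)" using is_pow2_double[OF is_pow2_double[OF U(1)]] by simp
  have v: "\<bar>rn L - L\<bar> \<le> u * U"
    using rn_error_pow2[OF rn p is_pow2_double[OF U(1)]] assms(7) unfolding U_def u_def by simp
  have "\<bar>S - rn S\<bar> \<le> U"
    using rn_error_pow2[OF rn p is_pow2_double[OF assms(4)]] assms(6) unfolding U_def u_def
    by (simp add: abs_minus_commute)
  then have sum_low: "\<bar>S - rn S + rn L\<bar> \<le> 4 * U"
    using abs_tail_argument_le[of S rn L] v assms(7) \<open>u * U \<le> U / 8\<close> unfolding U_def
    by linarith
  then have "\<bar>rn (S - rn S + rn L) - (S - rn S + rn L)\<bar> \<le> 2 * (u * U)"
    using rn_error_pow2[OF rn p U4] unfolding u_def by (simp add: mult.commute)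
  then have "\<bar>rn S + rn (S - rn S + rn L) - (S + L)\<bar> \<le> 3 * u\<^sup>2 * A"
    using tail_error_le[of rn S L] v unfolding U_def by (simp add: power2_eq_square mult_ac)
  moreover have "(1 - 3 / 2 * u) * A \<le> \<bar>S + L\<bar>"
    using assms(5,7) abs_triangle_ineq2[of S "- L"] by (simp add: algebra_simps)
  moreover have "\<bar>rn (S - rn S + rn L)\<bar> \<le> \<bar>rn S\<bar>"
    using tail_le_head[OF rn p assms(4) _ U4 _ sum_low]
      assms(5) u is_pow2_pos[OF assms(4)] unfolding U_def by simp
  ultimately show ?thesis
    using accurate_tailI[of p A 3 rn S L 1 "3 / 2"] u is_pow2_pos[OF assms(4)] unfolding u_def by simp
qed

lemma accurate_tail_exact_sum:
  fixes p :: nat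
  defines "u \<equiv> unit_round p"
  assumes rn: "is_RN p rn" and "3 \<le> p" "is_pow2 A"
    and "A / 2 \<le> \<bar>S\<bar>" "\<bar>S\<bar> \<le> A" "int_multiple (u * A) S" "\<bar>L\<bar> \<le> 3 / 2 * (u * A)"
  shows "accurate_tail p rn S L"
proof -
  have p: "1 \<le> p" and u: "0 < u" "u \<le> 1 / 8"
    using assms(3) unit_round_pos unit_round_le[OF assms(3)] unfolding u_def by auto
  define U where "U = u * A"
  have U: "is_pow2 U" "0 < U"
    unfolding U_def u_def using is_pow2_mult[OF is_pow2_unit_round assms(4)] is_pow2_pos by auto
  have "rn S = S"
    using rn_of_Fp[OF rn Fp_if_int_multiple[OF p assms(4)]] assms(6,7) unfolding u_def by simp
  then have tail: "rn (S - rn S + rn L) = rn L" using rn_of_Fp[OF rn rn_in_Fp[OF rn]] by simp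
  have "\<bar>rn S + rn (S - rn S + rn L) - (S + L)\<bar> \<le> 1 * u\<^sup>2 * A"
    using rn_error_pow2[OF rn p is_pow2_double[OF U(1)]] assms(8) tail \<open>rn S = S\<close>
    unfolding U_def u_def by (simp add: power2_eq_square mult_ac)
  moreover have "(1 / 2 - 3 / 2 * u) * A \<le> \<bar>S + L\<bar>"
    using assms(5,8) abs_triangle_ineq2[of S "- L"] by (simp add: algebra_simps)
  moreover have "\<bar>S - rn S + rn L\<bar> \<le> 2 * U"
    using rn_abs_le_Fp[OF rn Fp_pow2[OF p is_pow2_double[OF U(1)]], of L] assms(8) \<open>rn S = S\<close>
    unfolding U_def by simp
  then have "\<bar>rn (S - rn S + rn L)\<bar> \<le> \<bar>rn S\<bar>"
    using tail_le_head[OF rn p assms(4,5) is_pow2_double[OF U(1)]] u is_pow2_pos[OF assms(4)]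
    unfolding U_def by simp
  ultimately show ?thesis
    using accurate_tailI[of p A 1 rn S L "1 / 2" "3 / 2"] u is_pow2_pos[OF assms(4)] unfolding u_def by simp
qed

lemma accurate_tail_half_ulp_sum:
  fixes p :: nat
  defines "u \<equiv> unit_round p"
  assumes rn: "is_RN p rn" and "3 \<le> p" "is_pow2 A"
    and "A / 2 \<le> \<bar>S\<bar>" "\<bar>S\<bar> \<le> A" "int_multiple (u * A / 2) S" "\<bar>L\<bar> \<le> 5 / 4 * (u * A)"
  shows "accurate_tail p rn S L"
proof -
  have p: "1 \<le> p" and u: "0 < u" "u \<le> 1 / 8"
    using assms(3) unit_round_pos unit_round_le[OF assms(3)] unfolding u_def by auto
  define U where "U = u * A"
  have U: "is_pow2 U" "0 < U" "is_pow2 (U / 2)"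
    unfolding U_def u_def using is_pow2_mult[OF is_pow2_unit_round assms(4)] is_pow2_pos is_pow2_half
    by auto
  define w where "w = rn (S - rn S + rn L)"
  have v: "\<bar>rn L - L\<bar> \<le> u * U"
    using rn_error_pow2[OF rn p is_pow2_double[OF U(1)]] assms(8) U(2) unfolding U_def u_def by simp
  have sl: "\<bar>S - rn S\<bar> \<le> U / 2"
    using rn_error_pow2[OF rn p assms(4,6)] unfolding U_def u_def by (simp add: abs_minus_commute)
  have sl_grid: "int_multiple (U / 2) (S - rn S)"
    using int_multiple_diff[OF _ rn_int_multiple[OF rn p U(3)]] assms(7) unfolding U_def u_def by simp
  have "u * U \<le> U / 8" using u U(2) by (simp add: mult_right_mono)
  then have sum_low: "\<bar>S - rn S + rn L\<bar> \<le> 2 * U"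
    using abs_tail_argument_le[of S rn L] sl v assms(8) unfolding U_def by linarith
  have w_err: "\<bar>w - (S - rn S + rn L)\<bar> \<le> u * U"
    unfolding w_def using rn_error_pow2[OF rn p is_pow2_double[OF U(1)] sum_low] unfolding u_def by simp
  have "\<bar>rn S + w - (S + L)\<bar> \<le> 3 / 2 * (u * U)"
  proof (cases "\<bar>L\<bar> \<le> U")
    case True
    then have "\<bar>rn L - L\<bar> \<le> u * U / 2" using rn_error_pow2[OF rn p U(1)] unfolding u_def by simp
    then show ?thesis using tail_error_le[of rn S L] w_err unfolding w_def by simp
  next
    case False
    then have "U \<le> \<bar>rn L\<bar>" using rn_abs_ge_Fp[OF rn Fp_pow2[OF p U(1)], of L] by simp
    then have "S - rn S + rn L \<in> Fp p"
      using add_in_Fp_if_int_multiple[OF _ U(1) sl_grid rn_in_Fp[OF rn]] assms(3) sum_low by simp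
    then have "w = S - rn S + rn L" unfolding w_def using rn_of_Fp[OF rn] by blast
    moreover have "0 < u * U" using u U(2) by simp
    ultimately show ?thesis using tail_error_le[of rn S L] v unfolding w_def by simp
  qed
  then have "\<bar>rn S + rn (S - rn S + rn L) - (S + L)\<bar> \<le> 3 / 2 * u\<^sup>2 * A"
    unfolding w_def U_def by (simp add: power2_eq_square mult_ac)
  moreover have "(1 / 2 - 5 / 4 * u) * A \<le> \<bar>S + L\<bar>"
    using assms(5,8) abs_triangle_ineq2[of S "- L"] by (simp add: algebra_simps)
  moreover have "\<bar>rn (S - rn S + rn L)\<bar> \<le> \<bar>rn S\<bar>"
    using tail_le_head[OF rn p assms(4,5) is_pow2_double[OF U(1)] _ sum_low] u is_pow2_pos[OF assms(4)]
    unfolding U_def by simp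
  ultimately show ?thesis
    using accurate_tailI[of p A "3 / 2" rn S L "1 / 2" "5 / 4"] u is_pow2_pos[OF assms(4)]
    unfolding u_def by simp
qed

lemma accurate_tail_three_quarter_sum:
  fixes p :: nat
  defines "u \<equiv> unit_round p"
  assumes rn: "is_RN p rn" and "3 \<le> p" "is_pow2 A"
    and "3 / 4 * A \<le> \<bar>S\<bar>" "\<bar>S\<bar> \<le> A" "\<bar>L\<bar> \<le> 9 / 8 * (u * A)"
  shows "accurate_tail p rn S L"
proof -
  have p: "1 \<le> p" and u: "0 < u" "u \<le> 1 / 8"
    using assms(3) unit_round_pos unit_round_le[OF assms(3)] unfolding u_def by auto
  define U where "U = u * A"
  have U: "is_pow2 U" "0 < U"
    unfolding U_def u_def using is_pow2_mult[OF is_pow2_unit_round assms(4)] is_pow2_pos by auto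
  have v: "\<bar>rn L - L\<bar> \<le> u * U"
    using rn_error_pow2[OF rn p is_pow2_double[OF U(1)]] assms(7) U(2) unfolding U_def u_def by simp
  have "\<bar>S - rn S\<bar> \<le> U / 2"
    using rn_error_pow2[OF rn p assms(4,6)] unfolding U_def u_def by (simp add: abs_minus_commute)
  moreover have "u * U \<le> U / 8" using u U(2) by (simp add: mult_right_mono)
  ultimately have sum_low: "\<bar>S - rn S + rn L\<bar> \<le> 2 * U"
    using abs_tail_argument_le[of S rn L] v assms(7) unfolding U_def by linarith
  then have "\<bar>rn (S - rn S + rn L) - (S - rn S + rn L)\<bar> \<le> u * U"
    using rn_error_pow2[OF rn p is_pow2_double[OF U(1)]] unfolding u_def by simp
  then have "\<bar>rn S + rn (S - rn S + rn L) - (S + L)\<bar> \<le> 2 * u\<^sup>2 * A"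
    using tail_error_le[of rn S L] v unfolding U_def by (simp add: power2_eq_square mult_ac)
  moreover have "(3 / 4 - 9 / 8 * u) * A \<le> \<bar>S + L\<bar>"
    using assms(5,7) abs_triangle_ineq2[of S "- L"] by (simp add: algebra_simps)
  moreover have "\<bar>rn (S - rn S + rn L)\<bar> \<le> \<bar>rn S\<bar>"
    using tail_le_head[OF rn p assms(4) _ is_pow2_double[OF U(1)] _ sum_low] assms(5) u
      is_pow2_pos[OF assms(4)] unfolding U_def by simp
  ultimately show ?thesis
    using accurate_tailI[of p A 2 rn S L "3 / 4" "9 / 8"] u is_pow2_pos[OF assms(4)]
    unfolding u_def by simp
qed

lemma accurate_tail_unbalanced_binade:
  fixes p :: nat and A :: real
  defines "u \<equiv> unit_round p"
  assumes rn: "is_RN p rn" and "3 \<le> p" "is_pow2 A" "A \<le> \<bar>H\<bar>" "\<bar>H\<bar> < 2 * A" "\<bar>HL\<bar> \<le> u * A"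
    and "H \<in> Fp p" "h \<in> Fp p" "h \<noteq> 0" "rn (h + hl) = h" "H * h < 0" "2 * \<bar>h\<bar> \<le> \<bar>H\<bar>"
  shows "accurate_tail p rn (H + h) (HL + hl)"
proof -
  have p: "1 \<le> p" using assms(3) by simp
  have A2: "is_pow2 (A / 2)" and A4: "is_pow2 (A / 4)"
    using is_pow2_half[OF assms(4)] is_pow2_half[OF is_pow2_half[OF assms(4)]] by simp_all
  have "\<bar>h\<bar> < A" using assms(6,13) by simp
  have hl: "\<bar>hl\<bar> \<le> u * A / 2"
    using low_part_bound[OF rn p assms(9-11,4) \<open>\<bar>h\<bar> < A\<close>] unfolding u_def .
  have S: "\<bar>H + h\<bar> = \<bar>H\<bar> - \<bar>h\<bar>" using abs_add_opposite[OF assms(12)] assms(13) by simp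
  have L: "\<bar>HL + hl\<bar> \<le> \<bar>HL\<bar> + \<bar>hl\<bar>" by (rule abs_triangle_ineq)
  consider "A \<le> \<bar>H + h\<bar>" | "\<bar>H + h\<bar> < A" "A / 2 \<le> \<bar>h\<bar>"
    | "\<bar>H + h\<bar> < A" "A / 4 \<le> \<bar>h\<bar>" "\<bar>h\<bar> < A / 2" | "\<bar>H + h\<bar> < A" "\<bar>h\<bar> < A / 4"
    by linarith
  then show ?thesis
  proof cases
    case 1
    moreover have "\<bar>H + h\<bar> \<le> 2 * A" using S assms(6) by simp
    moreover have "\<bar>HL + hl\<bar> \<le> 3 / 2 * (u * A)" using L assms(7) hl by simp
    ultimately show ?thesis using accurate_tail_large_sum[OF rn assms(3,4)] unfolding u_def by blast
  next
    case 2
    have "int_multiple (u * A) (H + h)"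
      using Fp_add_int_multiple[OF assms(8,9) A2 _ 2(2)] assms(5) unfolding u_def by simp
    moreover have "A / 2 \<le> \<bar>H + h\<bar>" using S assms(5,13) by simp
    moreover have "\<bar>HL + hl\<bar> \<le> 3 / 2 * (u * A)" using L assms(7) hl by simp
    ultimately show ?thesis
      using accurate_tail_exact_sum[OF rn assms(3,4)] 2(1) unfolding u_def by simp
  next
    case 3
    have "int_multiple (u * A / 2) (H + h)"
      using Fp_add_int_multiple[OF assms(8,9) A4 _ 3(2)] assms(5) unfolding u_def
      by (simp add: mult.commute)
    moreover have "\<bar>hl\<bar> \<le> u * A / 4"
      using low_part_bound[OF rn p assms(9-11) A2 3(3)] unfolding u_def by simp
    then have "\<bar>HL + hl\<bar> \<le> 5 / 4 * (u * A)" using L assms(7) by simp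
    moreover have "A / 2 \<le> \<bar>H + h\<bar>" using S assms(5,13) by simp
    ultimately show ?thesis
      using accurate_tail_half_ulp_sum[OF rn assms(3,4)] 3(1) unfolding u_def by simp
  next
    case 4
    have "\<bar>hl\<bar> \<le> u * A / 8"
      using low_part_bound[OF rn p assms(9-11) A4 4(2)] unfolding u_def by simp
    then have "\<bar>HL + hl\<bar> \<le> 9 / 8 * (u * A)" using L assms(7) by simp
    moreover have "3 / 4 * A \<le> \<bar>H + h\<bar>" using S assms(5) 4(2) by simp
    ultimately show ?thesis
      using accurate_tail_three_quarter_sum[OF rn assms(3,4)] 4(1) unfolding u_def by simp
  qed
qed

lemma accurate_tail_unbalanced:
  assumes rn: "is_RN p rn" and "3 \<le> p" "H \<in> Fp p" "h \<in> Fp p" "H * h < 0" "2 * \<bar>h\<bar> \<le> \<bar>H\<bar>"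
    and "rn (H + HL) = H" "rn (h + hl) = h"
  shows "accurate_tail p rn (H + h) (HL + hl)"
proof -
  have "H \<noteq> 0" "h \<noteq> 0" using assms(5) by auto
  then obtain A where A: "is_pow2 A" "A \<le> \<bar>H\<bar>" "\<bar>H\<bar> < 2 * A"
    using is_pow2_binade by blast
  moreover from A have "\<bar>HL\<bar> \<le> unit_round p * A"
    using low_part_bound[OF rn _ assms(3) \<open>H \<noteq> 0\<close> assms(7) is_pow2_double[OF A(1)]] assms(2) by simp
  ultimately show ?thesis
    using accurate_tail_unbalanced_binade[OF rn assms(2) _ _ _ _ assms(3,4) \<open>h \<noteq> 0\<close> assms(8,5,6)]
    by blast
qed

lemma accurate_tail_rel_err:
  assumes "accurate_tail p rn S L" "3 \<le> p"
  shows "\<bar>rn S + rn (S - rn S + rn L) - (S + L)\<bar> / \<bar>S + L\<bar>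
    \<le> 3 * unit_round p ^ 2 + 18 * unit_round p ^ 3"
proof -
  define u where "u = unit_round p"
  define E where "E = \<bar>rn S + rn (S - rn S + rn L) - (S + L)\<bar>"
  have u: "0 < u" "u \<le> 1 / 8"
    using unit_round_pos unit_round_le[OF assms(2)] unfolding u_def by auto
  have E: "E * (1 - 3 * u) \<le> 3 * u\<^sup>2 * \<bar>S + L\<bar>" and "0 < \<bar>S + L\<bar>"
    using assms(1) unfolding accurate_tail_def E_def u_def by auto
  have "(3 * u\<^sup>2 + 18 * u ^ 3) * (1 - 3 * u) - 3 * u\<^sup>2 = 9 * u ^ 3 * (1 - 6 * u)"
    by (simp add: algebra_simps power2_eq_square power3_eq_cube)
  moreover have "0 \<le> 9 * u ^ 3 * (1 - 6 * u)" using u by simp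
  ultimately have "3 * u\<^sup>2 * \<bar>S + L\<bar> \<le> (3 * u\<^sup>2 + 18 * u ^ 3) * \<bar>S + L\<bar> * (1 - 3 * u)"
    using \<open>0 < \<bar>S + L\<bar>\<close> mult_right_mono[of "3 * u\<^sup>2" "(3 * u\<^sup>2 + 18 * u ^ 3) * (1 - 3 * u)" "\<bar>S + L\<bar>"]
    by (simp add: mult_ac)
  with E have "E * (1 - 3 * u) \<le> (3 * u\<^sup>2 + 18 * u ^ 3) * \<bar>S + L\<bar> * (1 - 3 * u)" by linarith
  then have "E \<le> (3 * u\<^sup>2 + 18 * u ^ 3) * \<bar>S + L\<bar>" using u by (simp add: mult_le_cancel_right)
  then show ?thesis using \<open>0 < \<bar>S + L\<bar>\<close> unfolding E_def u_def by (simp add: divide_le_eq)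
qed

lemma sloppy_add_rel_err_unbalanced:
  assumes rn: "is_RN p rn" and "3 \<le> p"
    and "xh \<in> Fp p" "xl \<in> Fp p" "yh \<in> Fp p" "yl \<in> Fp p"
    and "rn (xh + xl) = xh" "rn (yh + yl) = yh" "xh * yh < 0" "ratio_r xh yh \<le> 1 / 2"
  shows "rel_err (sloppy_add rn xh xl yh yl) (xh + xl + yh + yl)
    \<le> 3 * unit_round p ^ 2 + 18 * unit_round p ^ 3"
proof -
  define S L where "S = xh + yh" and "L = xl + yl"
  define w where "w = rn (S - rn S + rn L)"
  have unbalanced: "2 * \<bar>yh\<bar> \<le> \<bar>xh\<bar> \<or> 2 * \<bar>xh\<bar> \<le> \<bar>yh\<bar>"
    using ratio_r_le_half_iff[OF assms(9)] assms(10) by blast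
  have "accurate_tail p rn S L"
  proof (cases "2 * \<bar>yh\<bar> \<le> \<bar>xh\<bar>")
    case True
    then show ?thesis using accurate_tail_unbalanced[OF rn assms(2,3,5,9) _ assms(7,8)]
      unfolding S_def L_def by blast
  next
    case False
    then have "accurate_tail p rn (yh + xh) (yl + xl)"
      using accurate_tail_unbalanced[OF rn assms(2,5,3) _ _ assms(8,7)] unbalanced assms(9)
      by (simp add: mult.commute)
    then show ?thesis unfolding S_def L_def by (simp add: add.commute)
  qed
  then have tail: "\<bar>w\<bar> \<le> \<bar>rn S\<bar>" unfolding accurate_tail_def w_def by blast
  have "TwoSum rn xh yh = (rn S, S - rn S)"
    using TwoSum_exact_unbalanced[OF rn _ assms(3,5,9) unbalanced] assms(2) unfolding S_def by simp
  then have "sloppy_add rn xh xl yh yl = Fast2Sum rn (rn S) w"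
    unfolding w_def L_def by (rule sloppy_add_eq_Fast2Sum)
  moreover have "fst (Fast2Sum rn (rn S) w) + snd (Fast2Sum rn (rn S) w) = rn S + w"
    using Fast2Sum_exact[OF rn _ rn_in_Fp[OF rn] rn_in_Fp[OF rn] ] tail assms(2)
    unfolding w_def by simp
  moreover have "xh + xl + yh + yl = S + L" unfolding S_def L_def by simp
  ultimately show ?thesis
    using accurate_tail_rel_err[OF \<open>accurate_tail p rn S L\<close> assms(2)]
    unfolding rel_err_def w_def by simp
qed

section \<open>Balanced high parts\<close>

lemma balanced_difference_lower_bounds:
  fixes p :: nat and A :: real
  defines "U \<equiv> unit_round p * A"
  assumes "1 \<le> p" "H \<in> Fp p" "h \<in> Fp p" "f \<in> Fp p" "is_pow2 A"
    and "A \<le> H" "H < 2 * A" "A / 2 \<le> h" "h < f" "f < H"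
  shows "2 * U \<le> H - h"
    and "A \<le> h \<Longrightarrow> 4 * U \<le> H - h"
    and "A < H \<Longrightarrow> h < A \<Longrightarrow> 3 * U \<le> H - h"
proof -
  have A2: "is_pow2 (A / 2)" using is_pow2_half[OF assms(6)] .
  show "2 * U \<le> H - h"
    using Fp_gap[OF assms(4,5) A2 assms(9,10)] Fp_gap[OF assms(5,3) A2 _ assms(11)] assms(9,10)
    unfolding U_def by simp
  show "4 * U \<le> H - h" if "A \<le> h"
    using Fp_gap[OF assms(4,5,6) that assms(10)] Fp_gap[OF assms(5,3,6) _ assms(11)] that assms(10)
    unfolding U_def by simp
  show "3 * U \<le> H - h" if "A < H" "h < A"
  proof -
    have U: "is_pow2 U" "0 < U"
      unfolding U_def using is_pow2_mult[OF is_pow2_unit_round assms(6)] is_pow2_pos by auto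
    have "A + 2 * U \<le> H"
      using Fp_gap[OF Fp_pow2[OF assms(2,6)] assms(3,6) _ that(1)] unfolding U_def by simp
    with that(2) have "2 * U < H - h" by simp
    moreover have "A \<le> \<bar>H\<bar>" "A / 2 \<le> \<bar>h\<bar>" using assms(7,9) by simp_all
    then have "int_multiple (2 * U) H" "int_multiple U h"
      using Fp_int_multiple[OF assms(3,6)] Fp_int_multiple[OF assms(4) A2] unfolding U_def
      by (simp_all add: mult_ac)
    then have "int_multiple U (H - h)" using int_multiple_diff int_multiple_double by blast
    moreover have "int_multiple U (2 * U)" unfolding int_multiple_def by (rule exI[of _ 2]) simp
    ultimately show ?thesis using int_multiple_gap[of U "2 * U" "H - h"] U(2) by simp
  qed
qed

lemma balanced_tail_bounds_pos:
  assumes rn: "is_RN p rn" and "1 \<le> p" "H \<in> Fp p" "h \<in> Fp p" "rn (H + HL) = H" "rn (h + hl) = h"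
    and "0 < H" "h < 0" "H \<le> 2 * \<bar>h\<bar>" "f \<in> Fp p" "\<bar>h\<bar> < f" "f < H"
  shows "\<bar>rn (HL + hl)\<bar> \<le> \<bar>H + h\<bar> \<and> \<bar>HL + hl\<bar> \<le> \<bar>H + h + (HL + hl)\<bar>"
proof -
  obtain A where A: "is_pow2 A" "A \<le> H" "H < 2 * A"
    using is_pow2_binade[of H] assms(7) by auto
  define U where "U = unit_round p * A"
  have U: "is_pow2 U" "0 < U"
    unfolding U_def using is_pow2_mult[OF is_pow2_unit_round A(1)] is_pow2_pos by auto
  have S: "\<bar>H + h\<bar> = H - \<bar>h\<bar>" using assms(8,11,12) by simp
  have "\<bar>h\<bar> \<in> Fp p" "A / 2 \<le> \<bar>h\<bar>" using assms(4) A(2) assms(9) by simp_all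
  note gaps = balanced_difference_lower_bounds[OF assms(2,3) this(1) assms(10) A this(2) assms(11,12),
      folded U_def]
  have HL: "\<bar>HL\<bar> \<le> U"
    using low_part_bound[OF rn assms(2,3) _ assms(5) is_pow2_double[OF A(1)]] assms(7) A(3)
    unfolding U_def by simp
  have hl: "\<bar>hl\<bar> \<le> U" "\<bar>h\<bar> < A \<Longrightarrow> \<bar>hl\<bar> \<le> U / 2"
    using low_part_bound[OF rn assms(2,4) _ assms(6) is_pow2_double[OF A(1)]]
      low_part_bound[OF rn assms(2,4) _ assms(6) A(1)] assms(8,11,12) A(3)
    unfolding U_def by simp_all
  have L: "\<bar>HL + hl\<bar> \<le> \<bar>HL\<bar> + \<bar>hl\<bar>" by (rule abs_triangle_ineq)
  have "\<bar>rn (HL + hl)\<bar> \<le> 2 * U"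
    using rn_abs_le_Fp[OF rn Fp_pow2[OF assms(2) is_pow2_double[OF U(1)]]] L HL hl(1) by simp
  then have "\<bar>rn (HL + hl)\<bar> \<le> \<bar>H + h\<bar>" using gaps(1) S by simp
  moreover have "\<bar>HL + hl\<bar> \<le> H + h + (HL + hl)"
  proof (cases "A \<le> \<bar>h\<bar>")
    case True
    then have "4 * U \<le> H + h" using gaps(2) S by simp
    then show ?thesis using L HL hl(1) abs_ge_minus_self[of "HL + hl"] by linarith
  next
    case False
    then have L': "\<bar>HL + hl\<bar> \<le> 3 / 2 * U" using L HL hl(2) by simp
    show ?thesis
    proof (cases "A < H")
      case True
      then have "3 * U \<le> H + h" using gaps(3) False S by simp
      then show ?thesis using L' abs_ge_minus_self[of "HL + hl"] by linarith
    next
      case False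
      then have "H = A" using A(2) by simp
      \<comment> \<open>The spacing of floats just below \<open>A\<close> is \<open>U\<close>, half of that above.\<close>
      then have "- (U / 2) \<le> HL"
        using low_part_bound_at_pow2[OF rn assms(2) A(1)] assms(5) unfolding U_def by simp
      moreover have "- (U / 2) \<le> hl" using hl(2) \<open>\<not> A \<le> \<bar>h\<bar>\<close> by (simp add: abs_le_iff)
      moreover have "2 * U \<le> H + h" using gaps(1) S by simp
      ultimately show ?thesis using U(2) by (simp add: abs_le_iff)
    qed
  qed
  then have "\<bar>HL + hl\<bar> \<le> \<bar>H + h + (HL + hl)\<bar>" by (meson abs_ge_self order_trans)
  ultimately show ?thesis ..
qed

lemma balanced_tail_bounds:
  assumes rn: "is_RN p rn" and "1 \<le> p" "H \<in> Fp p" "h \<in> Fp p" "rn (H + HL) = H" "rn (h + hl) = h"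
    and "H * h < 0" "\<bar>H\<bar> \<le> 2 * \<bar>h\<bar>" "f \<in> Fp p" "\<bar>h\<bar> < f" "f < \<bar>H\<bar>"
  shows "\<bar>rn (HL + hl)\<bar> \<le> \<bar>H + h\<bar> \<and> \<bar>HL + hl\<bar> \<le> \<bar>H + h + (HL + hl)\<bar>"
proof (cases "0 < H")
  case True
  with assms(7) have "h < 0" by (simp add: mult_less_0_iff)
  with True show ?thesis using balanced_tail_bounds_pos[OF assms(1-6) _ _ _ assms(9,10)] assms(8,11) by simp
next
  case False
  with assms(7) have sg: "0 < - H" "- h < 0" by (auto simp: mult_less_0_iff)
  have "(\<lambda>x. - rn (- x)) (- H + - HL) = - H" "(\<lambda>x. - rn (- x)) (- h + - hl) = - h"
    using assms(5,6) by (simp_all only: minus_add_distrib minus_minus)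
  from balanced_tail_bounds_pos[OF is_RN_reflect[OF rn] assms(2) Fp_uminus[OF assms(3)]
      Fp_uminus[OF assms(4)] this sg _ assms(9)] sg assms(8,10,11)
  have "\<bar>(\<lambda>x. - rn (- x)) (- HL + - hl)\<bar> \<le> \<bar>- H + - h\<bar> \<and>
      \<bar>- HL + - hl\<bar> \<le> \<bar>- H + - h + (- HL + - hl)\<bar>"
    by simp
  then show ?thesis by (simp only: minus_add_distrib[symmetric] abs_minus_cancel minus_minus)
qed

lemma balanced_tail_bounds_sym:
  assumes rn: "is_RN p rn" and "1 \<le> p" "x \<in> Fp p" "y \<in> Fp p" "rn (x + xl) = x" "rn (y + yl) = y"
    and "x * y < 0" "\<bar>x\<bar> \<le> 2 * \<bar>y\<bar>" "\<bar>y\<bar> \<le> 2 * \<bar>x\<bar>"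
    and "f \<in> Fp p" "min \<bar>x\<bar> \<bar>y\<bar> < f" "f < max \<bar>x\<bar> \<bar>y\<bar>"
  shows "\<bar>rn (xl + yl)\<bar> \<le> \<bar>x + y\<bar> \<and> \<bar>xl + yl\<bar> \<le> \<bar>x + y + (xl + yl)\<bar>"
proof (cases "\<bar>y\<bar> \<le> \<bar>x\<bar>")
  case True
  then show ?thesis using balanced_tail_bounds[OF assms(1-8,10)] assms(11,12) by simp
next
  case False
  then have "\<bar>rn (yl + xl)\<bar> \<le> \<bar>y + x\<bar> \<and> \<bar>yl + xl\<bar> \<le> \<bar>y + x + (yl + xl)\<bar>"
    using balanced_tail_bounds[OF assms(1,2,4,3,6,5) _ assms(9,10)] assms(7,11,12)
    by (simp add: mult.commute)
  then show ?thesis by (simp add: ac_simps)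
qed

lemma sloppy_add_of_Fp_sum:
  assumes rn: "is_RN p rn" and "1 \<le> p" "xh \<in> Fp p" "yh \<in> Fp p" "xh + yh \<in> Fp p"
  shows "sloppy_add rn xh xl yh yl = Fast2Sum rn (xh + yh) (rn (xl + yl))"
proof -
  have "rn (0 + rn (xl + yl)) = rn (xl + yl)" using rn_of_Fp[OF rn rn_in_Fp[OF rn]] by simp
  then show ?thesis
    using sloppy_add_eq_Fast2Sum TwoSum_of_Fp_sum[OF assms] by simp
qed

lemma Fast2Sum_balanced_exact:
  assumes rn: "is_RN p rn" and "1 \<le> p" "xh \<in> Fp p" "yh \<in> Fp p" "rn (xh + xl) = xh" "rn (yh + yl) = yh"
    and "xh * yh < 0" "\<bar>xh\<bar> \<le> 2 * \<bar>yh\<bar>" "\<bar>yh\<bar> \<le> 2 * \<bar>xh\<bar>"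
    and "\<not> consecutive_floats p \<bar>xh\<bar> \<bar>yh\<bar>" "xh + yh \<in> Fp p"
  shows "fst (Fast2Sum rn (xh + yh) (rn (xl + yl))) + snd (Fast2Sum rn (xh + yh) (rn (xl + yl)))
      = xh + yh + rn (xl + yl) \<and> \<bar>xl + yl\<bar> \<le> \<bar>xh + yh + (xl + yl)\<bar>"
proof (cases "xh + yh = 0")
  case True
  then show ?thesis unfolding Fast2Sum_def Let_def
    using rn_of_Fp[OF rn rn_in_Fp[OF rn]] rn_of_Fp[OF rn Fp_0] by simp
next
  case False
  have "\<bar>xh\<bar> \<noteq> \<bar>yh\<bar>"
  proof
    assume "\<bar>xh\<bar> = \<bar>yh\<bar>"
    then have "xh = yh \<or> xh = - yh" by (simp add: abs_eq_iff)
    then show False using assms(7) False by auto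
  qed
  then obtain f where "f \<in> Fp p" "min \<bar>xh\<bar> \<bar>yh\<bar> < f" "f < max \<bar>xh\<bar> \<bar>yh\<bar>"
    using assms(3,4,10) unfolding consecutive_floats_def by auto
  then have "\<bar>rn (xl + yl)\<bar> \<le> \<bar>xh + yh\<bar> \<and> \<bar>xl + yl\<bar> \<le> \<bar>xh + yh + (xl + yl)\<bar>"
    using balanced_tail_bounds_sym[OF rn assms(2-9)] by blast
  then show ?thesis using Fast2Sum_exact[OF rn assms(2,11) rn_in_Fp[OF rn]] by simp
qed

lemma sloppy_add_rel_err_balanced:
  assumes rn: "is_RN p rn" and "1 \<le> p"
    and "xh \<in> Fp p" "xl \<in> Fp p" "yh \<in> Fp p" "yl \<in> Fp p"
    and "rn (xh + xl) = xh" "rn (yh + yl) = yh"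
    and "1 / 2 < ratio_r xh yh" "\<not> consecutive_floats p \<bar>xh\<bar> \<bar>yh\<bar>"
  shows "rel_err (sloppy_add rn xh xl yh yl) (xh + xl + yh + yl) \<le> unit_round p"
proof -
  define S L where "S = xh + yh" and "L = xl + yl"
  have opp: "xh * yh < 0" using assms(9) unfolding ratio_r_def by (auto split: if_splits)
  then have bal: "\<bar>xh\<bar> \<le> 2 * \<bar>yh\<bar>" "\<bar>yh\<bar> \<le> 2 * \<bar>xh\<bar>"
    using ratio_r_le_half_iff[OF opp] assms(9) by auto
  have "xh - (- yh) \<in> Fp p"
    using sterbenz[OF assms(2,3) Fp_uminus[OF assms(5)]] opp bal by simp
  then have "S \<in> Fp p" unfolding S_def by simp
  then have "fst (sloppy_add rn xh xl yh yl) + snd (sloppy_add rn xh xl yh yl) = S + rn L"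
    and L: "\<bar>L\<bar> \<le> \<bar>S + L\<bar>"
    using Fast2Sum_balanced_exact[OF rn assms(2,3,5,7,8) opp bal assms(10)]
      sloppy_add_of_Fp_sum[OF rn assms(2,3,5)] unfolding S_def L_def by simp_all
  moreover have "xh + xl + yh + yl = S + L" unfolding S_def L_def by simp
  ultimately have "rel_err (sloppy_add rn xh xl yh yl) (xh + xl + yh + yl) = \<bar>rn L - L\<bar> / \<bar>S + L\<bar>"
    unfolding rel_err_def by simp
  also have "\<dots> \<le> unit_round p * \<bar>L\<bar> / \<bar>S + L\<bar>"
    using rn_rel_error[OF rn assms(2)] by (simp add: divide_right_mono)
  also have "\<dots> \<le> unit_round p"
  proof (cases "S + L = 0")
    case True
    then show ?thesis using unit_round_pos[of p] by simp
  next
    case False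
    have "unit_round p * \<bar>L\<bar> \<le> unit_round p * \<bar>S + L\<bar>"
      using L unit_round_pos[of p] by (simp add: mult_left_mono)
    with False show ?thesis by (simp add: divide_le_eq)
  qed
  finally show ?thesis .
qed

theorem theorem3:
  shows
  "(\<exists>C p0. \<forall>p \<ge> p0. \<forall>rn. is_RN p rn \<longrightarrow>
      (\<forall>xh xl yh yl. xh \<in> Fp p \<and> xl \<in> Fp p \<and> yh \<in> Fp p \<and> yl \<in> Fp p \<and>
         rn (xh + xl) = xh \<and> rn (yh + yl) = yh \<and> xh * yh < 0 \<and>
         ratio_r xh yh \<le> 1/2 \<longrightarrow>
         rel_err (sloppy_add rn xh xl yh yl) (xh + xl + yh + yl)
           \<le> 3 * unit_round p ^ 2 + C * unit_round p ^ 3))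
   \<and>
   (\<forall>p \<ge> 2. \<forall>rn. is_RN p rn \<and> (ties_to_even p rn \<or> ties_to_away p rn) \<longrightarrow>
      (\<forall>xh xl yh yl. xh \<in> Fp p \<and> xl \<in> Fp p \<and> yh \<in> Fp p \<and> yl \<in> Fp p \<and>
         rn (xh + xl) = xh \<and> rn (yh + yl) = yh \<and> xh * yh < 0 \<and>
         ratio_r xh yh > 1/2 \<and> \<not> consecutive_floats p \<bar>xh\<bar> \<bar>yh\<bar> \<longrightarrow>
         rel_err (sloppy_add rn xh xl yh yl) (xh + xl + yh + yl) \<le> unit_round p))"
  using sloppy_add_rel_err_unbalanced sloppy_add_rel_err_balanced
  by (intro conjI exI[of _ 18] exI[of _ 3]) (blast, auto)

end
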